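(* Let $f:D\to\{0,1\}$, $D\subseteq\{0,1\}^n$, be a non-constant $n$-bit partial Boolean function that depends on $k$ bits and can be computed exactly by a quantum 1-query algorithm. Then $\mathrm{rank}(G_f(1,0))\in\{1,\dots,n\}$, $\mathrm{rank}(G_f(1,1))\in\{1,\dots,n\}$, and $$\mathrm{rank}(G_f(1,0))+\mathrm{rank}(G_f(1,1))\le 2n+2-k.$$
   Context: An $n$-bit partial Boolean function is a map $f:D\to\{0,1\}$ with $D\subseteq\{0,1\}^n$. For $x\in\{0,1\}^n$ let $|P(x)\rangle_1=(1,x_1,\dots,x_n)^T\in\mathbb{R}^{n+1}$. For $b\in\{0,1\}$, $G_f(1,b)$ is the $(n+1)\times|\{x\in D:f(x)=b\}|$ matrix whose columns are the vectors $|P(x)\rangle_1$ for all $x\in D$ with $f(x)=b$. $f$ depends on $k$ bits if $k$ is the minimum, over all multilinear polynomials $p$ with $p(x)=f(x)$ for all $x\in D$, of the number of variables occurring in $p$. A quantum 1-query algorithm works in a finite-dimensional Hilbert space with orthonormal basis $\{|i,j'\rangle\}$, $i\in\{0,\dots,n\}$; the oracle is $O_x|i,j'\rangle=(-1)^{x_i}|i,j'\rangle$ for $i\ge1$, $O_x|0,j'\rangle=|0,j'\rangle$; the algorithm applies input-independent unitaries $U_0,O_x,U_1$ to an initial state and performs a projective measurement with outcomes in $\{0,1\}$; it computes $f$ exactly if for every $x\in D$ the outcome is $f(x)$ with probability 1. *)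

theory Defs
  imports "Jordan_Normal_Form.Schur_Decomposition" "Jordan_Normal_Form.DL_Rank"
          "HOL-Library.List_Lexorder"
begin

text \<open>Inputs x in {0,1}^n are boolean lists of length n; bit x_i (1 <= i <= n) is x ! (i - 1).
  A partial Boolean function is a pair (D, f) with D a set of such lists and f :: bool list => bool
  (only its values on D matter).\<close>

definition bits :: "nat \<Rightarrow> bool list set" where
  "bits n = {x. length x = n}"

definition bit_val :: "bool \<Rightarrow> 'a::zero_neq_one" where
  "bit_val b = (if b then 1 else 0)"

definition Pvec1 :: "nat \<Rightarrow> bool list \<Rightarrow> real vec" where
  "Pvec1 n x = vec (n + 1) (\<lambda>i. if i = 0 then 1 else bit_val (x ! (i - 1)))"

text \<open>G_f(1,b): the (n+1) x |{x in D. f x = b}| matrix whose columns are the |P(x)>_1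
  (columns listed in lexicographic order of x; the order does not affect the rank).\<close>
definition Gf1 :: "nat \<Rightarrow> bool list set \<Rightarrow> (bool list \<Rightarrow> bool) \<Rightarrow> bool \<Rightarrow> real mat" where
  "Gf1 n D f b = mat_of_cols (n + 1) (map (Pvec1 n) (sorted_list_of_set {x \<in> D. f x = b}))"

text \<open>Multilinear polynomials in x_1..x_n with real coefficients, given by a coefficient
  function on subsets S of the (0-based) variable indices {0..<n}: p(x) = sum_S c_S prod_{i in S} x_i.\<close>
definition mlpoly_eval :: "nat \<Rightarrow> (nat set \<Rightarrow> real) \<Rightarrow> bool list \<Rightarrow> real" where
  "mlpoly_eval n c x = (\<Sum>S\<in>Pow {0..<n}. c S * (\<Prod>i\<in>S. bit_val (x ! i)))"

definition mlpoly_vars :: "nat \<Rightarrow> (nat set \<Rightarrow> real) \<Rightarrow> nat set" where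
  "mlpoly_vars n c = \<Union> {S \<in> Pow {0..<n}. c S \<noteq> 0}"

definition depends_on_bits :: "nat \<Rightarrow> bool list set \<Rightarrow> (bool list \<Rightarrow> bool) \<Rightarrow> nat \<Rightarrow> bool" where
  "depends_on_bits n D f k \<longleftrightarrow>
     k = (LEAST m. \<exists>c. (\<forall>x\<in>D. mlpoly_eval n c x = bit_val (f x)) \<and> card (mlpoly_vars n c) = m)"

text \<open>Quantum 1-query algorithms. The Hilbert space has orthonormal basis |i,j'>, i in {0..n},
  j' in {0..<w} (w >= 1 workspace dimension); |i,j'> is the standard basis vector with index i*w + j'.\<close>

definition query_op :: "nat \<Rightarrow> nat \<Rightarrow> bool list \<Rightarrow> complex mat" where
  "query_op n w x = mat ((n + 1) * w) ((n + 1) * w)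
     (\<lambda>(r, s). if r = s then (if r div w = 0 then 1 else (if x ! (r div w - 1) then -1 else 1)) else 0)"

definition unitary_mat :: "nat \<Rightarrow> complex mat \<Rightarrow> bool" where
  "unitary_mat N U \<longleftrightarrow> U \<in> carrier_mat N N \<and> mat_adjoint U * U = 1\<^sub>m N"

definition proj_mat :: "nat \<Rightarrow> complex mat \<Rightarrow> bool" where
  "proj_mat N P \<longleftrightarrow> P \<in> carrier_mat N N \<and> mat_adjoint P = P \<and> P * P = P"

text \<open>A projective measurement with outcomes in {0,1}: orthogonal projectors M0, M1 summing to identity
  (M b is the projector of outcome b; M True = outcome 1).\<close>
definition exact_1query :: "nat \<Rightarrow> bool list set \<Rightarrow> (bool list \<Rightarrow> bool) \<Rightarrow> bool" where
  "exact_1query n D f \<longleftrightarrow>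
     (\<exists>w::nat. \<exists>\<psi> U0 U1 (M :: bool \<Rightarrow> complex mat).
        let N = (n + 1) * w in
        w \<ge> 1 \<and> \<psi> \<in> carrier_vec N \<and> \<psi> \<bullet>c \<psi> = 1 \<and>
        unitary_mat N U0 \<and> unitary_mat N U1 \<and>
        proj_mat N (M False) \<and> proj_mat N (M True) \<and> M False + M True = 1\<^sub>m N \<and>
        (\<forall>x\<in>D. let \<phi> = U1 *\<^sub>v (query_op n w x *\<^sub>v (U0 *\<^sub>v \<psi>)) in
                  (M (f x) *\<^sub>v \<phi>) \<bullet>c (M (f x) *\<^sub>v \<phi>) = 1))"

end

theory Submission
  imports Defs
begin

text \<open>
  After the first unitary the algorithm holds a state \<chi>, and the oracle flips the sign of the i-th
  block of \<chi> exactly when x_i = 1 (with x_0 = 0). Hence the final states for inputs x and y have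
  inner product \<Sum>_i a_i (-1)^(x_i + y_i), where a_i \<ge> 0 is the squared norm of block i and
  \<Sum>_i a_i = 1; exactness forces this to vanish whenever f x \<noteq> f y.

  The coordinate change c(v) = (v_0, v_0 - 2 v_1, ..., v_0 - 2 v_n) sends |P(x)>_1 to the sign vector
  of x, so the columns of G_f(1,0) and G_f(1,1) are orthogonal for the positive semidefinite form
  B(v, w) = \<Sum>_i a_i c(v)_i c(w)_i, for which every |P(x)>_1 has norm 1. A column of one matrix that
  is B-orthogonal to all columns of the other bounds the rank of the other by n, and two mutually
  B-orthogonal independent families have at most n + 1 + #{i. a_i = 0} members in total. Finally f is
  constant on inputs agreeing on the bits of positive weight, so it is a multilinear polynomial in
  those bits, and k \<le> n + 1 - #{i. a_i = 0}.
\<close>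

section \<open>Column lists with trivial kernel\<close>

definition indep_cols :: "nat \<Rightarrow> 'a::field vec list \<Rightarrow> bool" where
  "indep_cols N ws \<longleftrightarrow>
     (\<forall>c\<in>carrier_vec (length ws). mat_of_cols N ws *\<^sub>v c = 0\<^sub>v N \<longrightarrow> c = 0\<^sub>v (length ws))"

lemma indep_colsD:
  "indep_cols N ws \<Longrightarrow> c \<in> carrier_vec (length ws) \<Longrightarrow> mat_of_cols N ws *\<^sub>v c = 0\<^sub>v N
    \<Longrightarrow> c = 0\<^sub>v (length ws)"
  unfolding indep_cols_def by blast

lemma mat_of_cols_mult_vec_index:
  assumes "i < N" "dim_vec c = length ws"
  shows "(mat_of_cols N ws *\<^sub>v c) $ i = (\<Sum>j<length ws. ws ! j $ i * c $ j)"
  using assms by (auto simp: mult_mat_vec_def scalar_prod_def mat_of_cols_def row_def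
      intro!: sum.cong)

lemma sum_lessThan_add:
  "(\<Sum>j<k + l. g j) = (\<Sum>j<k. g j) + (\<Sum>j<l. g (k + j))" for g :: "nat \<Rightarrow> 'a::comm_monoid_add"
  by (induct l) (auto simp: add.assoc)

lemma mat_of_cols_append_mult_vec:
  assumes g: "g \<in> carrier_vec (length us + length vs)"
  shows "mat_of_cols N (us @ vs) *\<^sub>v g =
    mat_of_cols N us *\<^sub>v vec (length us) (\<lambda>j. g $ j)
    + mat_of_cols N vs *\<^sub>v vec (length vs) (\<lambda>j. g $ (length us + j))"
    (is "_ = ?X + ?Y")
proof (rule eq_vecI)
  fix i assume "i < dim_vec (?X + ?Y)"
  then have i: "i < N" by simp
  have "(mat_of_cols N (us @ vs) *\<^sub>v g) $ i
      = (\<Sum>j<length us + length vs. (us @ vs) ! j $ i * g $ j)"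
    using g by (subst mat_of_cols_mult_vec_index[OF i]) auto
  also have "\<dots> = (\<Sum>j<length us. us ! j $ i * g $ j)
      + (\<Sum>j<length vs. vs ! j $ i * g $ (length us + j))"
    by (simp add: sum_lessThan_add nth_append)
  also have "\<dots> = ?X $ i + ?Y $ i"
    by (subst (1 2) mat_of_cols_mult_vec_index[OF i]) simp_all
  finally show "(mat_of_cols N (us @ vs) *\<^sub>v g) $ i = (?X + ?Y) $ i"
    using i by (simp del: index_mult_mat_vec)
qed simp

lemma indep_cols_distinct:
  assumes "indep_cols N ws"
  shows "distinct ws"
proof (rule ccontr)
  assume "\<not> distinct ws"
  then obtain i j where ij: "i < length ws" "j < length ws" "i \<noteq> j" "ws ! i = ws ! j"
    by (auto simp: distinct_conv_nth)
  define c where "c = vec (length ws) (\<lambda>l. if l = i then 1 else if l = j then -1 else (0::'a))"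
  have c: "c \<in> carrier_vec (length ws)" by (simp add: c_def)
  have "mat_of_cols N ws *\<^sub>v c = 0\<^sub>v N"
  proof (rule eq_vecI)
    fix r assume "r < dim_vec (0\<^sub>v N :: 'a vec)"
    then have r: "r < N" by simp
    have "(\<Sum>l<length ws. ws ! l $ r * c $ l) =
       (\<Sum>l<length ws. (if l = i then ws ! i $ r else 0) - (if l = j then ws ! j $ r else 0))"
      using ij by (intro sum.cong) (auto simp: c_def)
    also have "\<dots> = 0" using ij by (simp add: sum_subtractf)
    finally show "(mat_of_cols N ws *\<^sub>v c) $ r = 0\<^sub>v N $ r"
      using r c by (subst mat_of_cols_mult_vec_index) auto
  qed simp
  with assms c have "c = 0\<^sub>v (length ws)" by (rule indep_colsD)
  then have "c $ i = 0" using ij by simp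
  then show False by (simp add: c_def ij)
qed

lemma indep_cols_single:
  assumes "v \<in> carrier_vec N" "v \<noteq> 0\<^sub>v N"
  shows "indep_cols N [v]"
  unfolding indep_cols_def
proof (intro ballI impI)
  fix c :: "'a vec" assume c: "c \<in> carrier_vec (length [v])"
    and eq: "mat_of_cols N [v] *\<^sub>v c = 0\<^sub>v N"
  obtain i where i: "i < N" "v $ i \<noteq> 0"
    using assms by (metis carrier_vecD eq_vecI index_zero_vec)
  have "v $ i * c $ 0 = 0"
    using mat_of_cols_mult_vec_index[OF i(1), of c "[v]"] eq i c by simp
  then have "c $ 0 = 0" using i by simp
  then show "c = 0\<^sub>v (length [v])" using c by (auto intro!: eq_vecI)
qed

lemma indep_cols_appendI:
  assumes "set us \<subseteq> carrier_vec N" "set vs \<subseteq> carrier_vec N"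
    and indep: "\<And>\<alpha> \<beta>. \<alpha> \<in> carrier_vec (length us) \<Longrightarrow> \<beta> \<in> carrier_vec (length vs) \<Longrightarrow>
      mat_of_cols N us *\<^sub>v \<alpha> + mat_of_cols N vs *\<^sub>v \<beta> = 0\<^sub>v N \<Longrightarrow>
      \<alpha> = 0\<^sub>v (length us) \<and> \<beta> = 0\<^sub>v (length vs)"
  shows "indep_cols N (us @ vs)"
  unfolding indep_cols_def
proof (intro ballI impI)
  fix g assume g: "g \<in> carrier_vec (length (us @ vs))" and eq: "mat_of_cols N (us @ vs) *\<^sub>v g = 0\<^sub>v N"
  define \<alpha> where "\<alpha> = vec (length us) (\<lambda>j. g $ j)"
  define \<beta> where "\<beta> = vec (length vs) (\<lambda>j. g $ (length us + j))"
  have "mat_of_cols N us *\<^sub>v \<alpha> + mat_of_cols N vs *\<^sub>v \<beta> = 0\<^sub>v N"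
    using eq mat_of_cols_append_mult_vec[of g us vs N] g by (simp add: \<alpha>_def \<beta>_def)
  then have \<alpha>0: "\<alpha> = 0\<^sub>v (length us)" and \<beta>0: "\<beta> = 0\<^sub>v (length vs)"
    using indep[of \<alpha> \<beta>] by (simp_all add: \<alpha>_def \<beta>_def)
  have "g $ j = 0" if j: "j < length us + length vs" for j
  proof (cases "j < length us")
    case True
    then show ?thesis using \<alpha>0 by (metis \<alpha>_def index_vec index_zero_vec(1))
  next
    case False
    then have "j - length us < length vs" "length us + (j - length us) = j" using j by auto
    then show ?thesis using \<beta>0 by (metis \<beta>_def index_vec index_zero_vec(1))
  qed
  then show "g = 0\<^sub>v (length (us @ vs))" using g by (auto intro!: eq_vecI)
qed

context vec_space
begin

lemma lin_indpt_if_indep_cols: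
  fixes ws :: "'a vec list"
  assumes "indep_cols n ws" "set ws \<subseteq> carrier_vec n"
  shows "lin_indpt (set ws)"
proof
  assume "lin_dep (set ws)"
  then obtain c where "c \<in> carrier_vec (length ws)" "c \<noteq> 0\<^sub>v (length ws)"
      "mat_of_cols n ws *\<^sub>v c = 0\<^sub>v n"
    using lin_depE[of "mat_of_cols n ws" "length ws"] assms(2) indep_cols_distinct[OF assms(1)]
    by auto
  then show False using assms(1) indep_colsD by blast
qed

lemma indep_cols_length_le:
  fixes ws :: "'a vec list"
  assumes "indep_cols n ws" "set ws \<subseteq> carrier_vec n"
  shows "length ws \<le> n"
  using li_le_dim(2)[OF fin_dim _ lin_indpt_if_indep_cols[OF assms]] assms(2)
    distinct_card[OF indep_cols_distinct[OF assms(1)]] dim_is_n by simp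

lemma rank_ge_indep_cols:
  fixes ws :: "'a vec list"
  assumes A: "A \<in> carrier_mat n nc" and ws: "indep_cols n ws" "set ws \<subseteq> set (cols A)"
  shows "length ws \<le> rank A"
proof -
  have "set ws \<subseteq> carrier_vec n" using A ws(2) cols_dim by blast
  then show ?thesis
    using rank_ge_card_indpt[OF A ws(2) lin_indpt_if_indep_cols[OF ws(1)]]
      distinct_card[OF indep_cols_distinct[OF ws(1)]] by simp
qed

lemma obtain_indep_cols_rank:
  assumes A: "A \<in> carrier_mat n nc"
  obtains ws where "set ws \<subseteq> set (cols A)" "length ws = rank A" "indep_cols n ws"
proof -
  obtain S where S: "maximal S (\<lambda>T. T \<subseteq> set (cols A) \<and> lin_indpt T)"
    using maximal_exists[of "(\<lambda>T. T \<subseteq> set (cols A) \<and> lin_indpt T)" "card (set (cols A))" "{}"]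
    by (meson List.finite_set card_mono empty_iff empty_subsetI finite_lin_indpt2 rev_finite_subset)
  have SA: "S \<subseteq> set (cols A)" and li: "lin_indpt S" using S by (auto simp: maximal_def)
  obtain ws where ws: "distinct ws" "set ws = S"
    using finite_distinct_list finite_subset[OF SA] by blast
  have "set ws \<subseteq> carrier_vec n" using A SA ws cols_dim by blast
  then have "cols (mat_of_cols n ws) = ws" by simp
  then have "indep_cols n ws" unfolding indep_cols_def
    using lin_depI[of "mat_of_cols n ws" "length ws"] li ws by auto
  moreover have "length ws = rank A"
    using rank_card_indpt[OF A S] ws distinct_card by metis
  ultimately show thesis using that SA ws by blast
qed

lemma rank_pos_if_nonzero_col:
  assumes A: "A \<in> carrier_mat n nc" and v: "v \<in> set (cols A)" "v \<noteq> 0\<^sub>v n"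
  shows "0 < rank A"
proof -
  have "v \<in> carrier_vec n" using A v(1) cols_dim by blast
  then show ?thesis using rank_ge_indep_cols[OF A indep_cols_single, of v] v by simp
qed

end

section \<open>The sign form\<close>

definition sign_coord :: "real vec \<Rightarrow> nat \<Rightarrow> real" where
  "sign_coord v i = (if i = 0 then v $ 0 else v $ 0 - 2 * v $ i)"

definition sign_form :: "nat \<Rightarrow> (nat \<Rightarrow> real) \<Rightarrow> real vec \<Rightarrow> real vec \<Rightarrow> real" where
  "sign_form m a v w = (\<Sum>i<m. a i * sign_coord v i * sign_coord w i)"

lemma sign_form_commute: "sign_form m a v w = sign_form m a w v"
  unfolding sign_form_def by (simp add: algebra_simps)

lemma sign_coord_mult_mat_vec:
  assumes "i < m" "0 < m" "dim_vec \<alpha> = length ws"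
  shows "sign_coord (mat_of_cols m ws *\<^sub>v \<alpha>) i = (\<Sum>j<length ws. \<alpha> $ j * sign_coord (ws ! j) i)"
proof -
  have entry: "(mat_of_cols m ws *\<^sub>v \<alpha>) $ l = (\<Sum>j<length ws. \<alpha> $ j * ws ! j $ l)" if "l < m" for l
    using mat_of_cols_mult_vec_index[OF that assms(3)] by (simp add: mult.commute)
  show ?thesis
    using assms(1,2) by (simp del: index_mult_mat_vec
        add: sign_coord_def entry sum_subtractf sum_distrib_left algebra_simps)
qed

lemma sign_form_mult_mat_vec_left:
  assumes "0 < m" "dim_vec \<alpha> = length ws"
  shows "sign_form m a (mat_of_cols m ws *\<^sub>v \<alpha>) u = (\<Sum>j<length ws. \<alpha> $ j * sign_form m a (ws ! j) u)"
proof -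
  have "sign_form m a (mat_of_cols m ws *\<^sub>v \<alpha>) u
      = (\<Sum>i<m. \<Sum>j<length ws. \<alpha> $ j * (a i * sign_coord (ws ! j) i * sign_coord u i))"
    unfolding sign_form_def using assms
    by (simp add: sign_coord_mult_mat_vec sum_distrib_left sum_distrib_right algebra_simps)
  also have "\<dots> = (\<Sum>j<length ws. \<alpha> $ j * sign_form m a (ws ! j) u)"
    unfolding sign_form_def sum_distrib_left by (rule sum.swap)
  finally show ?thesis .
qed

lemma sign_form_mat_of_cols_orthogonal:
  assumes "0 < m" "dim_vec \<alpha> = length us" "dim_vec \<beta> = length vs"
    and orth: "\<And>v w. v \<in> set us \<Longrightarrow> w \<in> set vs \<Longrightarrow> sign_form m a v w = 0"
  shows "sign_form m a (mat_of_cols m us *\<^sub>v \<alpha>) (mat_of_cols m vs *\<^sub>v \<beta>) = 0"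
proof -
  have "sign_form m a (mat_of_cols m vs *\<^sub>v \<beta>) (us ! j) = 0" if "j < length us" for j
  proof -
    have "sign_form m a (vs ! l) (us ! j) = 0" if "l < length vs" for l
      using orth[of "us ! j" "vs ! l"] \<open>j < length us\<close> that by (simp add: sign_form_commute)
    then show ?thesis using assms(1,3) by (simp add: sign_form_mult_mat_vec_left)
  qed
  then have "sign_form m a (us ! j) (mat_of_cols m vs *\<^sub>v \<beta>) = 0" if "j < length us" for j
    using that by (simp add: sign_form_commute)
  then show ?thesis using assms(1,2) by (simp add: sign_form_mult_mat_vec_left)
qed

lemma eq_zero_if_sign_coord_zero:
  assumes "v \<in> carrier_vec m" "\<And>i. i < m \<Longrightarrow> sign_coord v i = 0"
  shows "v = 0\<^sub>v m"
proof (rule eq_vecI)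
  fix i assume "i < dim_vec (0\<^sub>v m)"
  then have "i < m" by simp
  then show "v $ i = 0\<^sub>v m $ i"
    using assms(2)[of 0] assms(2)[of i] by (auto simp: sign_coord_def split: if_splits)
qed (use assms in auto)

lemma indep_cols_snoc_nonisotropic:
  assumes m: "0 < m" and ws: "indep_cols m ws" "set ws \<subseteq> carrier_vec m" and u: "u \<in> carrier_vec m"
    and orth: "\<And>v. v \<in> set ws \<Longrightarrow> sign_form m a v u = 0" and uu: "sign_form m a u u \<noteq> 0"
  shows "indep_cols m (ws @ [u])"
proof (rule indep_cols_appendI)
  fix \<alpha> \<beta> assume \<alpha>: "\<alpha> \<in> carrier_vec (length ws)" and \<beta>: "\<beta> \<in> carrier_vec (length [u])"
    and eq: "mat_of_cols m ws *\<^sub>v \<alpha> + mat_of_cols m [u] *\<^sub>v \<beta> = 0\<^sub>v m"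
  let ?X = "mat_of_cols m ws *\<^sub>v \<alpha>"
  have "(mat_of_cols m [u] *\<^sub>v \<beta>) $ i = \<beta> $ 0 * u $ i" if "i < m" for i
    using \<beta> that by (subst mat_of_cols_mult_vec_index) auto
  then have X: "?X $ i = - \<beta> $ 0 * u $ i" if "i < m" for i
    using arg_cong[OF eq, of "\<lambda>v. v $ i"] that by simp
  have "sign_coord ?X i = - \<beta> $ 0 * sign_coord u i" if "i < m" for i
    using X[OF m] X[OF that] by (simp add: sign_coord_def algebra_simps)
  then have "sign_form m a ?X u = - \<beta> $ 0 * sign_form m a u u"
    unfolding sign_form_def by (simp add: sum_distrib_left algebra_simps)
  moreover have "sign_form m a ?X u = 0"
    using \<alpha> orth m by (simp add: sign_form_mult_mat_vec_left)
  ultimately have \<beta>0: "\<beta> $ 0 = 0" using uu by simp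
  then have "?X = 0\<^sub>v m" using X by (intro eq_vecI) auto
  then have "\<alpha> = 0\<^sub>v (length ws)" by (rule indep_colsD[OF ws(1) \<alpha>])
  moreover have "\<beta> = 0\<^sub>v (length [u])" using \<beta> \<beta>0 by (intro eq_vecI) auto
  ultimately show "\<alpha> = 0\<^sub>v (length ws) \<and> \<beta> = 0\<^sub>v (length [u])" ..
qed (use ws u in auto)

definition sign_coord_embed :: "nat \<Rightarrow> (nat \<Rightarrow> real) \<Rightarrow> (nat \<Rightarrow> nat) \<Rightarrow> real vec \<Rightarrow> real vec" where
  "sign_coord_embed N \<mu> \<iota> v = vec N (\<lambda>k. \<mu> k * sign_coord v (\<iota> k))"

lemma sign_coord_embed_mat_of_cols:
  assumes "0 < m" "k < N" "\<iota> k < m" "dim_vec \<alpha> = length ws"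
  shows "(mat_of_cols N (map (sign_coord_embed N \<mu> \<iota>) ws) *\<^sub>v \<alpha>) $ k
    = \<mu> k * sign_coord (mat_of_cols m ws *\<^sub>v \<alpha>) (\<iota> k)"
proof -
  have "(mat_of_cols N (map (sign_coord_embed N \<mu> \<iota>) ws) *\<^sub>v \<alpha>) $ k
      = (\<Sum>j<length ws. \<mu> k * (\<alpha> $ j * sign_coord (ws ! j) (\<iota> k)))"
    using assms by (subst mat_of_cols_mult_vec_index) (auto simp: sign_coord_embed_def intro!: sum.cong)
  also have "\<dots> = \<mu> k * sign_coord (mat_of_cols m ws *\<^sub>v \<alpha>) (\<iota> k)"
    using assms by (simp add: sign_coord_mult_mat_vec sum_distrib_left)
  finally show ?thesis .
qed

lemma weighted_orthogonal_coords_vanish: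
  fixes a u v :: "nat \<Rightarrow> real"
  assumes a: "\<And>i. i < m \<Longrightarrow> 0 \<le> a i"
    and uv: "\<And>i. i < m \<Longrightarrow> 0 < a i \<Longrightarrow> u i + v i = 0"
    and u0: "\<And>i. i < m \<Longrightarrow> a i = 0 \<Longrightarrow> u i = 0"
    and v0: "\<And>i. i < m \<Longrightarrow> a i = 0 \<Longrightarrow> v i = 0"
    and orth: "(\<Sum>i<m. a i * u i * v i) = 0"
    and i: "i < m"
  shows "u i = 0 \<and> v i = 0"
proof -
  have "a i * u i * v i = - (a i * (u i)\<^sup>2)" if "i < m" for i
    using a[OF that] uv[OF that] u0[OF that]
    by (cases "a i = 0") (auto simp: power2_eq_square eq_neg_iff_add_eq_0[symmetric])
  then have "(\<Sum>i<m. a i * (u i)\<^sup>2) = 0" using orth by (simp add: sum_negf)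
  then have "a i * (u i)\<^sup>2 = 0"
    using sum_nonneg_eq_0_iff[of "{..<m}" "\<lambda>i. a i * (u i)\<^sup>2"] a i by auto
  then show ?thesis
    using a[OF i] uv[OF i] u0[OF i] v0[OF i] by (cases "a i = 0") auto
qed

lemma sign_orthogonal_indep_cols_length_le:
  fixes us vs :: "real vec list"
  assumes m: "0 < m" and a: "\<And>i. i < m \<Longrightarrow> 0 \<le> a i"
    and us: "set us \<subseteq> carrier_vec m" "indep_cols m us"
    and vs: "set vs \<subseteq> carrier_vec m" "indep_cols m vs"
    and orth: "\<And>v w. v \<in> set us \<Longrightarrow> w \<in> set vs \<Longrightarrow> sign_form m a v w = 0"
  shows "length us + length vs \<le> m + card {i. i < m \<and> a i = 0}"
proof -
  txt \<open>Embed each v of us as (c(v), 0) and each w of vs as (c(w) on the support of a, c(w) on the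
    zero set Q of a), in dimension m + |Q|. A dependency among the embedded vectors yields
    combinations X, Y with c(X) = -c(Y) on the support of a and c(X) = c(Y) = 0 on Q, and then
    0 = B(X, Y) = -\<Sum>_i a_i c(X)_i^2 forces X = Y = 0.\<close>
  define Q where "Q = {i. i < m \<and> a i = 0}"
  define qs where "qs = sorted_list_of_set Q"
  define N where "N = m + card Q"
  have qs: "set qs = Q" "length qs = card Q" by (simp_all add: qs_def Q_def)
  define \<mu>\<^sub>1 :: "nat \<Rightarrow> real" where "\<mu>\<^sub>1 k = (if k < m \<and> a k = 0 then 0 else 1)" for k
  define \<iota>\<^sub>1 where "\<iota>\<^sub>1 k = (if k < m then k else qs ! (k - m))" for k
  let ?embed\<^sub>0 = "sign_coord_embed N (\<lambda>k. if k < m then 1 else 0) (\<lambda>k. if k < m then k else 0)"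
  let ?embed\<^sub>1 = "sign_coord_embed N \<mu>\<^sub>1 \<iota>\<^sub>1"
  have "indep_cols N (map ?embed\<^sub>0 us @ map ?embed\<^sub>1 vs)"
  proof (rule indep_cols_appendI)
    fix \<alpha> \<beta> assume \<alpha>: "\<alpha> \<in> carrier_vec (length (map ?embed\<^sub>0 us))"
      and \<beta>: "\<beta> \<in> carrier_vec (length (map ?embed\<^sub>1 vs))"
      and eq: "mat_of_cols N (map ?embed\<^sub>0 us) *\<^sub>v \<alpha> + mat_of_cols N (map ?embed\<^sub>1 vs) *\<^sub>v \<beta> = 0\<^sub>v N"
    let ?X = "mat_of_cols m us *\<^sub>v \<alpha>" and ?Y = "mat_of_cols m vs *\<^sub>v \<beta>"
    have \<iota>\<^sub>1: "\<iota>\<^sub>1 k < m" if "k < N" for k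
    proof (cases "k < m")
      case False
      then have "qs ! (k - m) \<in> Q" using that qs by (auto simp: N_def)
      then show ?thesis using False by (simp add: \<iota>\<^sub>1_def Q_def)
    qed (simp add: \<iota>\<^sub>1_def)
    have entry: "(if k < m then sign_coord ?X k else 0) + \<mu>\<^sub>1 k * sign_coord ?Y (\<iota>\<^sub>1 k) = 0"
      if "k < N" for k
      using arg_cong[OF eq, of "\<lambda>v. v $ k"] that m \<alpha> \<beta> \<iota>\<^sub>1[OF that]
      by (cases "k < m") (simp_all del: index_mult_mat_vec add: sign_coord_embed_mat_of_cols)
    have Y0: "sign_coord ?Y i = 0" if "i < m" "a i = 0" for i
    proof -
      have "i \<in> set qs" using that qs(1) by (simp add: Q_def)
      then obtain t where "t < card Q" "qs ! t = i" using qs(2) by (metis in_set_conv_nth)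
      then show ?thesis using entry[of "m + t"] by (simp add: N_def \<mu>\<^sub>1_def \<iota>\<^sub>1_def)
    qed
    have XY: "sign_form m a ?X ?Y = 0"
      using \<alpha> \<beta> m orth by (intro sign_form_mat_of_cols_orthogonal) auto
    have uv: "sign_coord ?X i + sign_coord ?Y i = 0" if "i < m" "0 < a i" for i
      using entry[of i] that by (simp add: N_def \<mu>\<^sub>1_def \<iota>\<^sub>1_def)
    have X0: "sign_coord ?X i = 0" if "i < m" "a i = 0" for i
      using entry[of i] that by (simp add: N_def \<mu>\<^sub>1_def \<iota>\<^sub>1_def)
    have XY0: "sign_coord ?X i = 0 \<and> sign_coord ?Y i = 0" if "i < m" for i
      using weighted_orthogonal_coords_vanish[OF a uv X0 Y0 XY[unfolded sign_form_def] that] .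
    have "?X = 0\<^sub>v m" "?Y = 0\<^sub>v m"
      using XY0 by (auto intro!: eq_zero_if_sign_coord_zero carrier_vecI)
    then show "\<alpha> = 0\<^sub>v (length (map ?embed\<^sub>0 us)) \<and> \<beta> = 0\<^sub>v (length (map ?embed\<^sub>1 vs))"
      using indep_colsD[OF us(2)] indep_colsD[OF vs(2)] \<alpha> \<beta> by simp
  qed (auto simp: sign_coord_embed_def)
  then have "length (map ?embed\<^sub>0 us @ map ?embed\<^sub>1 vs) \<le> N"
    by (rule vec_space.indep_cols_length_le) (auto simp: sign_coord_embed_def)
  then show ?thesis by (simp add: N_def Q_def)
qed

lemma rank_less_if_nonisotropic:
  assumes A: "A \<in> carrier_mat m nc" and m: "0 < m" and u: "u \<in> carrier_vec m"
    and orth: "\<And>v. v \<in> set (cols A) \<Longrightarrow> sign_form m a v u = 0" and uu: "sign_form m a u u \<noteq> 0"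
  shows "vec_space.rank m A < m"
proof -
  obtain ws where ws: "set ws \<subseteq> set (cols A)" "length ws = vec_space.rank m A" "indep_cols m ws"
    by (rule vec_space.obtain_indep_cols_rank[OF A])
  have "set ws \<subseteq> carrier_vec m" using A ws(1) cols_dim by blast
  then have "length (ws @ [u]) \<le> m"
    using indep_cols_snoc_nonisotropic[OF m ws(3) _ u _ uu] orth ws(1) u
    by (intro vec_space.indep_cols_length_le) auto
  then show ?thesis using ws(2) by simp
qed

lemma rank_add_le_if_sign_orthogonal:
  assumes A: "A \<in> carrier_mat m nA" and B: "B \<in> carrier_mat m nB"
    and m: "0 < m" and a: "\<And>i. i < m \<Longrightarrow> 0 \<le> a i"
    and orth: "\<And>v w. v \<in> set (cols A) \<Longrightarrow> w \<in> set (cols B) \<Longrightarrow> sign_form m a v w = 0"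
  shows "vec_space.rank m A + vec_space.rank m B \<le> m + card {i. i < m \<and> a i = 0}"
proof -
  obtain us where us: "set us \<subseteq> set (cols A)" "length us = vec_space.rank m A" "indep_cols m us"
    by (rule vec_space.obtain_indep_cols_rank[OF A])
  obtain vs where vs: "set vs \<subseteq> set (cols B)" "length vs = vec_space.rank m B" "indep_cols m vs"
    by (rule vec_space.obtain_indep_cols_rank[OF B])
  have "set us \<subseteq> carrier_vec m" "set vs \<subseteq> carrier_vec m"
    using A B us(1) vs(1) cols_dim by blast+
  moreover have "sign_form m a v w = 0" if "v \<in> set us" "w \<in> set vs" for v w
    using orth us(1) vs(1) that by blast
  ultimately show ?thesis
    using sign_orthogonal_indep_cols_length_le[of m a us vs, OF m a _ us(3) _ vs(3)] us(2) vs(2)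
    by simp
qed

section \<open>One-query algorithms\<close>

lemma cscalar_prod_sum:
  fixes v w :: "complex vec"
  shows "v \<in> carrier_vec N \<Longrightarrow> w \<in> carrier_vec N \<Longrightarrow> v \<bullet>c w = (\<Sum>r<N. v $ r * cnj (w $ r))"
  by (auto simp: scalar_prod_def lessThan_atLeast0)

lemma mat_adjoint_carrier:
  fixes A :: "complex mat"
  shows "A \<in> carrier_mat N N \<Longrightarrow> mat_adjoint A \<in> carrier_mat N N"
  by (auto simp: mat_adjoint_def)

lemma mat_adjoint_index:
  fixes A :: "complex mat"
  shows "A \<in> carrier_mat N N \<Longrightarrow> s < N \<Longrightarrow> r < N \<Longrightarrow> mat_adjoint A $$ (s, r) = cnj (A $$ (r, s))"
  by (auto simp: mat_adjoint_def mat_of_rows_def)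

lemma cscalar_prod_mult_mat_vec_adjoint:
  fixes A :: "complex mat"
  assumes A: "A \<in> carrier_mat N N" and v: "v \<in> carrier_vec N" and w: "w \<in> carrier_vec N"
  shows "(A *\<^sub>v v) \<bullet>c w = v \<bullet>c (mat_adjoint A *\<^sub>v w)"
proof -
  have Av: "(A *\<^sub>v v) $ r = (\<Sum>s<N. A $$ (r, s) * v $ s)" if "r < N" for r
    using A v that by (auto simp: mult_mat_vec_def scalar_prod_def lessThan_atLeast0 row_def)
  have Aw: "(mat_adjoint A *\<^sub>v w) $ s = (\<Sum>r<N. cnj (A $$ (r, s)) * w $ r)" if "s < N" for s
    using mat_adjoint_carrier[OF A] mat_adjoint_index[OF A that] w that
    by (auto simp: mult_mat_vec_def scalar_prod_def lessThan_atLeast0 row_def)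
  have "(A *\<^sub>v v) \<bullet>c w = (\<Sum>r<N. (\<Sum>s<N. A $$ (r, s) * v $ s) * cnj (w $ r))"
    using cscalar_prod_sum[of "A *\<^sub>v v" N w] A v w Av by simp
  also have "\<dots> = (\<Sum>s<N. v $ s * (\<Sum>r<N. A $$ (r, s) * cnj (w $ r)))"
    by (simp add: sum_distrib_left sum_distrib_right algebra_simps) (rule sum.swap)
  also have "\<dots> = v \<bullet>c (mat_adjoint A *\<^sub>v w)"
    using cscalar_prod_sum[of v N "mat_adjoint A *\<^sub>v w"] mat_adjoint_carrier[OF A] v w Aw
    by (simp add: cnj_sum)
  finally show ?thesis .
qed

lemma unitary_mat_cscalar_prod:
  assumes U: "unitary_mat N U" and v: "v \<in> carrier_vec N" and w: "w \<in> carrier_vec N"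
  shows "(U *\<^sub>v v) \<bullet>c (U *\<^sub>v w) = v \<bullet>c w"
proof -
  have UC: "U \<in> carrier_mat N N" and UU: "mat_adjoint U * U = 1\<^sub>m N"
    using U by (auto simp: unitary_mat_def)
  have "(U *\<^sub>v v) \<bullet>c (U *\<^sub>v w) = v \<bullet>c ((mat_adjoint U * U) *\<^sub>v w)"
    using cscalar_prod_mult_mat_vec_adjoint[OF UC v] mat_adjoint_carrier[OF UC] UC w by simp
  then show ?thesis using UU w by simp
qed

lemma proj_mat_cscalar_prod_self:
  assumes P: "proj_mat N P" and v: "v \<in> carrier_vec N"
  shows "(P *\<^sub>v v) \<bullet>c (P *\<^sub>v v) = v \<bullet>c (P *\<^sub>v v)"
proof -
  have PC: "P \<in> carrier_mat N N" and "mat_adjoint P = P" "P * P = P"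
    using P by (auto simp: proj_mat_def)
  then have "(P *\<^sub>v v) \<bullet>c (P *\<^sub>v v) = v \<bullet>c (P *\<^sub>v (P *\<^sub>v v))"
    using cscalar_prod_mult_mat_vec_adjoint[OF PC v, of "P *\<^sub>v v"] v by simp
  also have "P *\<^sub>v (P *\<^sub>v v) = (P * P) *\<^sub>v v"
    using PC v by simp
  finally show ?thesis using \<open>P * P = P\<close> by simp
qed

lemma cscalar_prod_add_right:
  fixes v w w' :: "complex vec"
  assumes "v \<in> carrier_vec N" "w \<in> carrier_vec N" "w' \<in> carrier_vec N"
  shows "v \<bullet>c (w + w') = v \<bullet>c w + v \<bullet>c w'"
  using assms by (simp add: cscalar_prod_sum[of _ N] sum.distrib algebra_simps)

lemma proj_mat_complement_zero:
  assumes P: "proj_mat N P" and R: "proj_mat N R" and PR: "P + R = 1\<^sub>m N"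
    and \<phi>: "\<phi> \<in> carrier_vec N" "\<phi> \<bullet>c \<phi> = 1" and P\<phi>: "(P *\<^sub>v \<phi>) \<bullet>c (P *\<^sub>v \<phi>) = 1"
  shows "R *\<^sub>v \<phi> = 0\<^sub>v N"
proof -
  have PC: "P \<in> carrier_mat N N" and RC: "R \<in> carrier_mat N N" using P R by (auto simp: proj_mat_def)
  have "\<phi> = P *\<^sub>v \<phi> + R *\<^sub>v \<phi>"
    using add_mult_distrib_mat_vec[OF PC RC \<phi>(1)] PR \<phi>(1) by simp
  then have "\<phi> \<bullet>c \<phi> = \<phi> \<bullet>c (P *\<^sub>v \<phi>) + \<phi> \<bullet>c (R *\<^sub>v \<phi>)"
    using cscalar_prod_add_right[OF \<phi>(1), of "P *\<^sub>v \<phi>" "R *\<^sub>v \<phi>"] PC RC \<phi>(1)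
    by (metis mult_mat_vec_carrier)
  then have "(R *\<^sub>v \<phi>) \<bullet>c (R *\<^sub>v \<phi>) = 0"
    using \<phi>(2) P\<phi> proj_mat_cscalar_prod_self[OF P \<phi>(1)] proj_mat_cscalar_prod_self[OF R \<phi>(1)] by simp
  moreover have "R *\<^sub>v \<phi> \<in> carrier_vec N" using RC \<phi>(1) by simp
  ultimately show ?thesis using conjugate_square_eq_0_vec by blast
qed

lemma proj_mat_complement_orthogonal:
  assumes P: "proj_mat N P" and R: "proj_mat N R" and PR: "P + R = 1\<^sub>m N"
    and \<phi>: "\<phi> \<in> carrier_vec N" "\<phi> \<bullet>c \<phi> = 1" "(P *\<^sub>v \<phi>) \<bullet>c (P *\<^sub>v \<phi>) = 1"
    and \<chi>: "\<chi> \<in> carrier_vec N" "\<chi> \<bullet>c \<chi> = 1" "(R *\<^sub>v \<chi>) \<bullet>c (R *\<^sub>v \<chi>) = 1"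
  shows "\<phi> \<bullet>c \<chi> = 0"
proof -
  have PC: "P \<in> carrier_mat N N" and RC: "R \<in> carrier_mat N N" and "mat_adjoint P = P"
    using P R by (auto simp: proj_mat_def)
  have RP: "R + P = 1\<^sub>m N" using PR comm_add_mat[OF PC RC] by simp
  have "P *\<^sub>v \<phi> = \<phi>"
    using add_mult_distrib_mat_vec[OF PC RC \<phi>(1)] PR \<phi>(1)
      proj_mat_complement_zero[OF P R PR \<phi>] PC by simp
  then have "\<phi> \<bullet>c \<chi> = \<phi> \<bullet>c (P *\<^sub>v \<chi>)"
    using cscalar_prod_mult_mat_vec_adjoint[OF PC \<phi>(1) \<chi>(1)] \<open>mat_adjoint P = P\<close> by simp
  then show ?thesis using proj_mat_complement_zero[OF R P RP \<chi>] \<phi>(1) by simp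
qed

definition query_sign :: "bool list \<Rightarrow> nat \<Rightarrow> real" where
  "query_sign x i = (if i = 0 then 1 else if x ! (i - 1) then -1 else 1)"

lemma query_sign_square: "query_sign x i * query_sign x i = 1"
  by (simp add: query_sign_def)

lemma weighted_sign_correlation_eq_one:
  assumes a: "\<And>i. 0 \<le> a i" "(\<Sum>i<n + 1. a i) = 1"
    and agree: "\<And>i. i < n \<Longrightarrow> 0 < a (Suc i) \<Longrightarrow> x ! i = y ! i"
  shows "(\<Sum>i<n + 1. a i * query_sign x i * query_sign y i) = 1"
proof -
  have "a i * query_sign x i * query_sign y i = a i" if i: "i < n + 1" for i
  proof (cases "a i = 0 \<or> i = 0")
    case False
    then obtain j where j: "i = Suc j" using not0_implies_Suc by blast
    have "0 < a (Suc j)" using a(1)[of i] False j by simp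
    then show ?thesis using agree[of j] i j by (simp add: query_sign_def)
  qed (auto simp: query_sign_def)
  then have "(\<Sum>i<n + 1. a i * query_sign x i * query_sign y i) = (\<Sum>i<n + 1. a i)"
    by (intro sum.cong) auto
  then show ?thesis using a(2) by linarith
qed

definition separating_weights ::
    "nat \<Rightarrow> bool list set \<Rightarrow> (bool list \<Rightarrow> bool) \<Rightarrow> (nat \<Rightarrow> real) \<Rightarrow> bool" where
  "separating_weights n D f a \<longleftrightarrow> (\<forall>i. 0 \<le> a i) \<and> (\<Sum>i<n + 1. a i) = 1 \<and>
    (\<forall>x\<in>D. \<forall>y\<in>D. f x \<noteq> f y \<longrightarrow> (\<Sum>i<n + 1. a i * query_sign x i * query_sign y i) = 0)"

lemma query_op_mult_vec_index:
  assumes "r < (n + 1) * w" "\<chi> \<in> carrier_vec ((n + 1) * w)"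
  shows "(query_op n w x *\<^sub>v \<chi>) $ r = complex_of_real (query_sign x (r div w)) * \<chi> $ r"
proof -
  have "(query_op n w x *\<^sub>v \<chi>) $ r = (\<Sum>s\<in>{0..<(n + 1) * w}. (if r = s then
      (if r div w = 0 then 1 else (if x ! (r div w - 1) then -1 else 1)) else 0) * \<chi> $ s)"
    using assms by (auto simp: query_op_def mult_mat_vec_def scalar_prod_def row_def intro!: sum.cong)
  also have "\<dots> = (if r div w = 0 then 1 else (if x ! (r div w - 1) then -1 else 1)) * \<chi> $ r"
    using assms(1) by (simp add: if_distrib[of "\<lambda>t. t * _"] sum.delta cong: if_cong)
  finally show ?thesis by (simp add: query_sign_def)
qed

lemma sum_lessThan_mult_div:
  fixes h b :: "nat \<Rightarrow> real"
  assumes "0 < w"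
  shows "(\<Sum>r<k * w. h (r div w) * b r) = (\<Sum>i<k. h i * (\<Sum>j<w. b (i * w + j)))"
proof (induct k)
  case (Suc k)
  have "(\<Sum>r<Suc k * w. h (r div w) * b r) = (\<Sum>r<k * w + w. h (r div w) * b r)"
    by (simp add: add.commute)
  also have "\<dots> = (\<Sum>r<k * w. h (r div w) * b r) + (\<Sum>j<w. h ((k * w + j) div w) * b (k * w + j))"
    by (rule sum_lessThan_add)
  also have "(\<Sum>j<w. h ((k * w + j) div w) * b (k * w + j)) = (\<Sum>j<w. h k * b (k * w + j))"
    using assms by (intro sum.cong) auto
  finally show ?case using Suc by (simp add: sum_distrib_left)
qed simp

lemma query_op_carrier: "query_op n w x \<in> carrier_mat ((n + 1) * w) ((n + 1) * w)"
  unfolding query_op_def by (rule mat_carrier)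

text \<open>The squared norm of block i of the state, i.e. the probability that the query addresses bit i
  (block 0 is the one the oracle leaves untouched).\<close>

definition block_weight :: "nat \<Rightarrow> complex vec \<Rightarrow> nat \<Rightarrow> real" where
  "block_weight w \<chi> i = (\<Sum>j<w. (cmod (\<chi> $ (i * w + j)))\<^sup>2)"

lemma cscalar_prod_query_op:
  assumes w: "0 < w" and \<chi>: "\<chi> \<in> carrier_vec ((n + 1) * w)"
  shows "(query_op n w x *\<^sub>v \<chi>) \<bullet>c (query_op n w y *\<^sub>v \<chi>)
    = complex_of_real (\<Sum>i<n + 1. block_weight w \<chi> i * query_sign x i * query_sign y i)"
proof -
  have O: "query_op n w z *\<^sub>v \<chi> \<in> carrier_vec ((n + 1) * w)" for z
    using mult_mat_vec_carrier[OF query_op_carrier \<chi>] .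
  have "(query_op n w x *\<^sub>v \<chi>) \<bullet>c (query_op n w y *\<^sub>v \<chi>)
      = (\<Sum>r<(n + 1) * w. (complex_of_real (query_sign x (r div w)) * \<chi> $ r)
          * cnj (complex_of_real (query_sign y (r div w)) * \<chi> $ r))"
    unfolding cscalar_prod_sum[OF O O]
    by (rule sum.cong) (simp_all only: lessThan_iff query_op_mult_vec_index[OF _ \<chi>])
  also have "\<dots> = (\<Sum>r<(n + 1) * w. complex_of_real (query_sign x (r div w) * query_sign y (r div w)
          * (cmod (\<chi> $ r))\<^sup>2))"
  proof (rule sum.cong)
    fix r
    have "\<chi> $ r * cnj (\<chi> $ r) = complex_of_real ((cmod (\<chi> $ r))\<^sup>2)"
      using complex_norm_square[of "\<chi> $ r"] by simp
    then show "(complex_of_real (query_sign x (r div w)) * \<chi> $ r)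
          * cnj (complex_of_real (query_sign y (r div w)) * \<chi> $ r)
      = complex_of_real (query_sign x (r div w) * query_sign y (r div w) * (cmod (\<chi> $ r))\<^sup>2)"
      by (simp add: algebra_simps)
  qed simp
  also have "\<dots> = complex_of_real (\<Sum>r<(n + 1) * w. query_sign x (r div w) * query_sign y (r div w)
          * (cmod (\<chi> $ r))\<^sup>2)"
    by (simp only: of_real_sum)
  also have "(\<Sum>r<(n + 1) * w. query_sign x (r div w) * query_sign y (r div w) * (cmod (\<chi> $ r))\<^sup>2)
      = (\<Sum>i<n + 1. block_weight w \<chi> i * query_sign x i * query_sign y i)"
    using sum_lessThan_mult_div[OF w, of "\<lambda>i. query_sign x i * query_sign y i"
        "\<lambda>r. (cmod (\<chi> $ r))\<^sup>2" "n + 1"]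
    by (simp add: block_weight_def algebra_simps)
  finally show ?thesis .
qed

lemma sum_block_weight:
  assumes w: "0 < w" and \<chi>: "\<chi> \<in> carrier_vec ((n + 1) * w)" "\<chi> \<bullet>c \<chi> = 1"
  shows "(\<Sum>i<n + 1. block_weight w \<chi> i) = 1"
proof -
  have "\<chi> \<bullet>c \<chi> = (\<Sum>r<(n + 1) * w. complex_of_real ((cmod (\<chi> $ r))\<^sup>2))"
    unfolding cscalar_prod_sum[OF \<chi>(1) \<chi>(1)]
    by (rule sum.cong) (simp_all add: complex_norm_square[symmetric])
  then have "complex_of_real (\<Sum>r<(n + 1) * w. (cmod (\<chi> $ r))\<^sup>2) = 1"
    using \<chi>(2) unfolding of_real_sum by simp
  then have "(\<Sum>r<(n + 1) * w. (cmod (\<chi> $ r))\<^sup>2) = 1"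
    by (simp only: of_real_eq_1_iff)
  then show ?thesis
    using sum_lessThan_mult_div[OF w, of "\<lambda>_. 1" "\<lambda>r. (cmod (\<chi> $ r))\<^sup>2" "n + 1"]
    by (simp add: block_weight_def)
qed

lemma complementary_proj_mat:
  assumes "proj_mat N (M False)" "proj_mat N (M True)" "M False + M True = 1\<^sub>m N" "b \<noteq> b'"
  shows "M b + M b' = 1\<^sub>m N"
proof (cases b)
  case True
  then show ?thesis using assms comm_add_mat[of "M False" N N "M True"] by (simp add: proj_mat_def)
qed (use assms in simp)

lemma exact_1query_weights:
  assumes "exact_1query n D f"
  obtains a where "separating_weights n D f a"
proof -
  obtain w \<psi> U0 U1 and M :: "bool \<Rightarrow> complex mat" where
    w1: "w \<ge> 1" and \<psi>: "\<psi> \<in> carrier_vec ((n + 1) * w)" "\<psi> \<bullet>c \<psi> = 1"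
    and U0: "unitary_mat ((n + 1) * w) U0" and U1: "unitary_mat ((n + 1) * w) U1"
    and M: "proj_mat ((n + 1) * w) (M False)" "proj_mat ((n + 1) * w) (M True)"
      "M False + M True = 1\<^sub>m ((n + 1) * w)"
    and exact: "\<And>x. x \<in> D \<Longrightarrow> (M (f x) *\<^sub>v (U1 *\<^sub>v (query_op n w x *\<^sub>v (U0 *\<^sub>v \<psi>)))) \<bullet>c
                   (M (f x) *\<^sub>v (U1 *\<^sub>v (query_op n w x *\<^sub>v (U0 *\<^sub>v \<psi>)))) = 1"
    using assms unfolding exact_1query_def Let_def by blast
  have w: "0 < w" using w1 by simp
  define N where "N = (n + 1) * w"
  define \<chi> where "\<chi> = U0 *\<^sub>v \<psi>"
  define \<phi> where "\<phi> z = U1 *\<^sub>v (query_op n w z *\<^sub>v \<chi>)" for z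
  have U0C: "U0 \<in> carrier_mat N N" and U1C: "U1 \<in> carrier_mat N N"
    using U0 U1 by (auto simp: unitary_mat_def N_def)
  have \<chi>: "\<chi> \<in> carrier_vec N" "\<chi> \<bullet>c \<chi> = 1"
    using U0C \<psi> unitary_mat_cscalar_prod[OF U0 \<psi>(1) \<psi>(1)] by (simp_all add: \<chi>_def N_def)
  have O\<chi>: "query_op n w z *\<^sub>v \<chi> \<in> carrier_vec N" for z
    using mult_mat_vec_carrier[OF query_op_carrier] \<chi>(1) by (simp add: N_def)
  have \<phi>C: "\<phi> z \<in> carrier_vec N" for z
    unfolding \<phi>_def using mult_mat_vec_carrier[OF U1C O\<chi>] .
  have \<phi>\<phi>: "\<phi> x \<bullet>c \<phi> y = complex_of_real
      (\<Sum>i<n + 1. block_weight w \<chi> i * query_sign x i * query_sign y i)" for x y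
    unfolding \<phi>_def unitary_mat_cscalar_prod[OF U1[folded N_def] O\<chi> O\<chi>]
    using cscalar_prod_query_op[OF w] \<chi>(1) by (simp add: N_def)
  have sum1: "(\<Sum>i<n + 1. block_weight w \<chi> i) = 1"
    using sum_block_weight[OF w] \<chi> by (simp add: N_def)
  have \<phi>1: "\<phi> x \<bullet>c \<phi> x = 1" for x
  proof -
    have "(\<Sum>i<n + 1. block_weight w \<chi> i * query_sign x i * query_sign x i) = 1"
      using sum1 by (simp add: mult.assoc query_sign_square)
    then show ?thesis using \<phi>\<phi>[of x x] by (simp del: of_real_sum sum.lessThan_Suc)
  qed
  have "separating_weights n D f (block_weight w \<chi>)"
    unfolding separating_weights_def
  proof (intro conjI allI ballI impI)
    show "0 \<le> block_weight w \<chi> i" for i by (simp add: block_weight_def sum_nonneg)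
    show "(\<Sum>i<n + 1. block_weight w \<chi> i) = 1" by (fact sum1)
    fix x y assume xy: "x \<in> D" "y \<in> D" "f x \<noteq> f y"
    have PM: "proj_mat N (M b)" for b using M by (cases b) (simp_all add: N_def)
    have "\<phi> x \<bullet>c \<phi> y = 0"
      by (rule proj_mat_complement_orthogonal[OF PM PM complementary_proj_mat[OF M xy(3), folded N_def]
          \<phi>C \<phi>1 _ \<phi>C \<phi>1])
        (use exact[OF xy(1)] exact[OF xy(2)] in \<open>simp_all add: \<phi>_def \<chi>_def\<close>)
    then show "(\<Sum>i<n + 1. block_weight w \<chi> i * query_sign x i * query_sign y i) = 0"
      using \<phi>\<phi>[of x y] by (simp only: of_real_eq_0_iff)
  qed
  then show thesis by (rule that)
qed

section \<open>Multilinear representations\<close>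

definition mlpoly_representable :: "nat \<Rightarrow> nat set \<Rightarrow> (bool list \<Rightarrow> real) \<Rightarrow> bool" where
  "mlpoly_representable n V h \<longleftrightarrow>
     (\<exists>c. (\<forall>S. c S \<noteq> 0 \<longrightarrow> S \<subseteq> V) \<and> (\<forall>x. length x = n \<longrightarrow> h x = mlpoly_eval n c x))"

lemma mlpoly_representable_const: "mlpoly_representable n V (\<lambda>x. k)"
proof -
  define c where "c S = (if S = {} then k else 0)" for S :: "nat set"
  have "mlpoly_eval n c x = k" for x
    unfolding mlpoly_eval_def c_def by (simp add: if_distrib[of "\<lambda>t. t * _"] cong: if_cong)
  then show ?thesis unfolding mlpoly_representable_def by (intro exI[of _ c]) (auto simp: c_def)
qed

lemma mlpoly_representable_lin:
  assumes "mlpoly_representable n V h1" "mlpoly_representable n V h2"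
  shows "mlpoly_representable n V (\<lambda>x. \<alpha> * h1 x + \<beta> * h2 x)"
proof -
  obtain c1 where c1: "\<forall>S. c1 S \<noteq> 0 \<longrightarrow> S \<subseteq> V" "\<forall>x. length x = n \<longrightarrow> h1 x = mlpoly_eval n c1 x"
    using assms(1) unfolding mlpoly_representable_def by blast
  obtain c2 where c2: "\<forall>S. c2 S \<noteq> 0 \<longrightarrow> S \<subseteq> V" "\<forall>x. length x = n \<longrightarrow> h2 x = mlpoly_eval n c2 x"
    using assms(2) unfolding mlpoly_representable_def by blast
  define c where "c S = \<alpha> * c1 S + \<beta> * c2 S" for S
  have "\<forall>S. c S \<noteq> 0 \<longrightarrow> S \<subseteq> V"
    unfolding c_def using c1(1) c2(1) by (metis add.right_neutral mult_zero_right)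
  moreover have "mlpoly_eval n c x = \<alpha> * mlpoly_eval n c1 x + \<beta> * mlpoly_eval n c2 x" for x
    unfolding mlpoly_eval_def c_def by (simp add: sum.distrib sum_distrib_left algebra_simps)
  ultimately show ?thesis
    unfolding mlpoly_representable_def using c1(2) c2(2) by (intro exI[of _ c]) auto
qed

lemma mlpoly_representable_mono:
  "mlpoly_representable n V h \<Longrightarrow> V \<subseteq> W \<Longrightarrow> mlpoly_representable n W h"
  unfolding mlpoly_representable_def by blast

lemma mlpoly_representable_cong:
  "mlpoly_representable n V g \<Longrightarrow> (\<And>x. length x = n \<Longrightarrow> h x = g x) \<Longrightarrow> mlpoly_representable n V h"
  unfolding mlpoly_representable_def by metis

lemma mlpoly_eval_mult_var:
  assumes v: "v < n" and c: "\<And>S. c S \<noteq> 0 \<Longrightarrow> v \<notin> S"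
  shows "mlpoly_eval n (\<lambda>T. if v \<in> T then c (T - {v}) else 0) x = bit_val (x ! v) * mlpoly_eval n c x"
proof -
  let ?A = "Pow {0..<n}"
  define F where "F S = (\<Prod>i\<in>S. (bit_val (x ! i) :: real))" for S
  have "mlpoly_eval n (\<lambda>T. if v \<in> T then c (T - {v}) else 0) x
      = (\<Sum>T\<in>{T\<in>?A. v \<in> T}. c (T - {v}) * F T)"
    unfolding mlpoly_eval_def F_def[symmetric]
    by (simp add: sum.inter_filter[symmetric] if_distrib[of "\<lambda>t. t * _"] cong: if_cong)
  also have "{T\<in>?A. v \<in> T} = insert v ` {S\<in>?A. v \<notin> S}"
  proof
    show "{T\<in>?A. v \<in> T} \<subseteq> insert v ` {S\<in>?A. v \<notin> S}"
    proof
      fix T assume T: "T \<in> {T\<in>?A. v \<in> T}"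
      then have "T = insert v (T - {v})" "T - {v} \<in> {S\<in>?A. v \<notin> S}" by auto
      then show "T \<in> insert v ` {S\<in>?A. v \<notin> S}" by blast
    qed
  qed (use v in auto)
  also have "(\<Sum>T\<in>insert v ` {S\<in>?A. v \<notin> S}. c (T - {v}) * F T)
      = (\<Sum>S\<in>{S\<in>?A. v \<notin> S}. c (insert v S - {v}) * F (insert v S))"
    by (rule sum.reindex_cong[of "insert v"]) (auto simp: inj_on_def)
  also have "\<dots> = (\<Sum>S\<in>{S\<in>?A. v \<notin> S}. bit_val (x ! v) * (c S * F S))"
  proof (rule sum.cong)
    fix S assume S: "S \<in> {S\<in>?A. v \<notin> S}"
    then have "finite S" using finite_subset[of S "{0..<n}"] by auto
    then show "c (insert v S - {v}) * F (insert v S) = bit_val (x ! v) * (c S * F S)"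
      using S by (simp add: F_def)
  qed simp
  also have "\<dots> = bit_val (x ! v) * (\<Sum>S\<in>?A. c S * F S)"
    using c by (subst sum.mono_neutral_left[of ?A]) (auto simp: sum_distrib_left)
  finally show ?thesis unfolding mlpoly_eval_def F_def .
qed

lemma mlpoly_representable_mult_var:
  assumes r: "mlpoly_representable n V h" and v: "v < n" "v \<notin> V"
  shows "mlpoly_representable n (insert v V) (\<lambda>x. bit_val (x ! v) * h x)"
proof -
  obtain c where c: "\<forall>S. c S \<noteq> 0 \<longrightarrow> S \<subseteq> V" "\<forall>x. length x = n \<longrightarrow> h x = mlpoly_eval n c x"
    using r unfolding mlpoly_representable_def by blast
  then have "v \<notin> S" if "c S \<noteq> 0" for S using v(2) that by blast
  then show ?thesis
    unfolding mlpoly_representable_def using mlpoly_eval_mult_var[OF v(1)] c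
    by (intro exI[of _ "\<lambda>T. if v \<in> T then c (T - {v}) else 0"]) auto
qed

lemma mlpoly_representable_if_determined:
  assumes "finite V" "V \<subseteq> {0..<n}"
    and "\<And>x y. length x = n \<Longrightarrow> length y = n \<Longrightarrow> \<forall>i\<in>V. x ! i = y ! i \<Longrightarrow> h x = h y"
  shows "mlpoly_representable n V h"
  using assms
proof (induction V arbitrary: h rule: finite_induct)
  case empty
  have "mlpoly_representable n {} (\<lambda>x. h (replicate n False))" by (rule mlpoly_representable_const)
  then show ?case by (rule mlpoly_representable_cong) (rule empty.prems(2), simp_all)
next
  case (insert v V)
  have v: "v < n" and V: "V \<subseteq> {0..<n}" using insert.prems(1) by auto
  define h0 where "h0 x = h (x[v := False])" for x
  define h1 where "h1 x = h (x[v := True])" for x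
  have h_update: "h (x[v := b]) = h (y[v := b])"
    if "length x = n" "length y = n" "\<forall>i\<in>V. x ! i = y ! i" for x y b
    using that v by (intro insert.prems(2)) (auto simp: nth_list_update)
  have h0: "mlpoly_representable n V h0"
    by (rule insert.IH[OF V]) (unfold h0_def, rule h_update, assumption+)
  have h1: "mlpoly_representable n V h1"
    by (rule insert.IH[OF V]) (unfold h1_def, rule h_update, assumption+)
  have "mlpoly_representable n (insert v V)
      (\<lambda>x. bit_val (x ! v) * (1 * h1 x + (-1) * h0 x))"
    by (rule mlpoly_representable_mult_var[OF mlpoly_representable_lin[OF h1 h0] v insert.hyps(2)])
  then have "mlpoly_representable n (insert v V)
      (\<lambda>x. 1 * h0 x + 1 * (bit_val (x ! v) * (1 * h1 x + (-1) * h0 x)))"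
    using mlpoly_representable_mono[OF h0] by (intro mlpoly_representable_lin) auto
  then show ?case
  proof (rule mlpoly_representable_cong)
    fix x :: "bool list"
    have "x[v := x ! v] = x" by simp
    then show "h x = 1 * h0 x + 1 * (bit_val (x ! v) * (1 * h1 x + (-1) * h0 x))"
      by (cases "x ! v") (simp_all add: h0_def h1_def bit_val_def)
  qed
qed

lemma depends_on_bits_le_card:
  assumes D: "D \<subseteq> bits n" and k: "depends_on_bits n D f k" and V: "V \<subseteq> {0..<n}"
    and determined: "\<And>x y. x \<in> D \<Longrightarrow> y \<in> D \<Longrightarrow> \<forall>i\<in>V. x ! i = y ! i \<Longrightarrow> f x = f y"
  shows "k \<le> card V"
proof -
  have finV: "finite V" using V finite_subset by blast
  txt \<open>Extend f from D to all inputs so that the extension only looks at the bits in V.\<close>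
  define agree where "agree x y \<longleftrightarrow> (\<forall>i\<in>V. x ! i = (y::bool list) ! i)" for x y
  define h where "h x = (if \<exists>y\<in>D. agree x y then bit_val (f (SOME y. y \<in> D \<and> agree x y)) else (0::real))"
    for x
  have "h x = h y" if "agree x y" for x y
  proof -
    have "(\<lambda>z. z \<in> D \<and> agree x z) = (\<lambda>z. z \<in> D \<and> agree y z)" using that by (auto simp: agree_def)
    then show ?thesis unfolding h_def by (metis (no_types, lifting))
  qed
  then have "mlpoly_representable n V h"
    using mlpoly_representable_if_determined[OF finV V] by (simp add: agree_def)
  then obtain c where c: "\<forall>S. c S \<noteq> 0 \<longrightarrow> S \<subseteq> V" "\<forall>x. length x = n \<longrightarrow> h x = mlpoly_eval n c x"
    unfolding mlpoly_representable_def by blast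
  have "h x = bit_val (f x)" if x: "x \<in> D" for x
  proof -
    let ?y = "SOME y. y \<in> D \<and> agree x y"
    have ex: "\<exists>y. y \<in> D \<and> agree x y" using x by (auto simp: agree_def)
    then have "?y \<in> D \<and> agree x ?y" by (rule someI_ex)
    then have "f ?y = f x" using determined[of ?y x] x by (auto simp: agree_def)
    then show ?thesis unfolding h_def using ex by auto
  qed
  then have "\<forall>x\<in>D. mlpoly_eval n c x = bit_val (f x)" using c(2) D by (auto simp: bits_def)
  then have "k \<le> card (mlpoly_vars n c)"
    using k unfolding depends_on_bits_def by (blast intro: Least_le)
  also have "\<dots> \<le> card V"
    using c(1) finV by (intro card_mono) (auto simp: mlpoly_vars_def)
  finally show ?thesis .
qed

section \<open>The ranks of G_f(1,0) and G_f(1,1)\<close>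

lemma finite_bits: "finite (bits n)"
  unfolding bits_def using finite_lists_length_eq[of "UNIV :: bool set" n] by simp

lemma Pvec1_carrier: "Pvec1 n x \<in> carrier_vec (n + 1)"
  by (simp add: Pvec1_def)

lemma Pvec1_nonzero: "Pvec1 n x \<noteq> 0\<^sub>v (n + 1)"
proof
  assume "Pvec1 n x = 0\<^sub>v (n + 1)"
  then have "Pvec1 n x $ 0 = 0" by simp
  then show False by (simp add: Pvec1_def)
qed

lemma sign_coord_Pvec1: "i < n + 1 \<Longrightarrow> sign_coord (Pvec1 n x) i = query_sign x i"
  by (auto simp: sign_coord_def Pvec1_def query_sign_def bit_val_def)

lemma sign_form_Pvec1:
  "sign_form (n + 1) a (Pvec1 n x) (Pvec1 n y) = (\<Sum>i<n + 1. a i * query_sign x i * query_sign y i)"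
  unfolding sign_form_def by (rule sum.cong) (simp_all add: sign_coord_Pvec1)

lemma Gf1_carrier: "Gf1 n D f b \<in> carrier_mat (n + 1) (card {x \<in> D. f x = b})"
  using mat_of_cols_carrier(1)[of "n + 1" "map (Pvec1 n) (sorted_list_of_set {x \<in> D. f x = b})"]
  unfolding Gf1_def by simp

lemma set_cols_Gf1:
  assumes "finite D"
  shows "set (cols (Gf1 n D f b)) = Pvec1 n ` {x \<in> D. f x = b}"
proof -
  have "set (map (Pvec1 n) (sorted_list_of_set {x \<in> D. f x = b})) \<subseteq> carrier_vec (n + 1)"
    using Pvec1_carrier by auto
  then show ?thesis using assms by (simp add: Gf1_def)
qed

lemma card_pos_Suc_add_card_zero_le:
  fixes a :: "nat \<Rightarrow> real"
  assumes "\<And>i. 0 \<le> a i"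
  shows "card {i. i < n \<and> 0 < a (Suc i)} + card {i. i < n + 1 \<and> a i = 0} \<le> n + 1"
proof -
  let ?P = "{i. i < n + 1 \<and> 0 < a i}" and ?Z = "{i. i < n + 1 \<and> a i = 0}"
  have "?P \<union> ?Z = {..<n + 1}"
  proof (intro equalityI subsetI)
    fix i assume "i \<in> {..<n + 1}"
    then show "i \<in> ?P \<union> ?Z" using assms[of i] by (cases "a i = 0") auto
  qed auto
  moreover have "finite ?P" "finite ?Z" "?P \<inter> ?Z = {}" by auto
  ultimately have "card ?P + card ?Z = n + 1" by (metis card_Un_disjoint card_lessThan)
  moreover have "card {i. i < n \<and> 0 < a (Suc i)} = card (Suc ` {i. i < n \<and> 0 < a (Suc i)})"
    by (simp add: card_image)
  moreover have "card (Suc ` {i. i < n \<and> 0 < a (Suc i)}) \<le> card ?P"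
    by (intro card_mono) auto
  ultimately show ?thesis by linarith
qed

lemma sign_form_cols_Gf1_orthogonal:
  assumes "finite D" "separating_weights n D f a"
    and "v \<in> set (cols (Gf1 n D f b))" "w \<in> set (cols (Gf1 n D f (\<not> b)))"
  shows "sign_form (n + 1) a v w = 0"
proof -
  obtain x y where "x \<in> D" "y \<in> D" "f x \<noteq> f y" "v = Pvec1 n x" "w = Pvec1 n y"
    using assms(3,4) unfolding set_cols_Gf1[OF assms(1)] by blast
  then show ?thesis
    using assms(2) unfolding separating_weights_def by (simp only: sign_form_Pvec1 simp_thms)
qed

lemma rank_Gf1_bounds:
  assumes D: "finite D" and a: "separating_weights n D f a"
    and x: "x \<in> D" "f x = b" and y: "y \<in> D" "f y \<noteq> b"
  shows "vec_space.rank (n + 1) (Gf1 n D f b) \<in> {1..n}"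
proof -
  have x_col: "Pvec1 n x \<in> set (cols (Gf1 n D f b))"
    and y_col: "Pvec1 n y \<in> set (cols (Gf1 n D f (\<not> b)))"
    using x y by (auto simp: set_cols_Gf1[OF D])
  have "sign_form (n + 1) a (Pvec1 n y) (Pvec1 n y) = 1"
    using a unfolding sign_form_Pvec1 separating_weights_def
    by (intro weighted_sign_correlation_eq_one) auto
  then have "vec_space.rank (n + 1) (Gf1 n D f b) < n + 1"
    using sign_form_cols_Gf1_orthogonal[OF D a _ y_col]
    by (intro rank_less_if_nonisotropic[OF Gf1_carrier _ Pvec1_carrier]) auto
  moreover have "0 < vec_space.rank (n + 1) (Gf1 n D f b)"
    using vec_space.rank_pos_if_nonzero_col[OF Gf1_carrier x_col Pvec1_nonzero] .
  ultimately show ?thesis by simp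
qed

lemma rank_Gf1_add_le:
  assumes "finite D" "separating_weights n D f a"
  shows "vec_space.rank (n + 1) (Gf1 n D f False) + vec_space.rank (n + 1) (Gf1 n D f True)
    \<le> n + 1 + card {i. i < n + 1 \<and> a i = 0}"
  using sign_form_cols_Gf1_orthogonal[OF assms, of _ False] assms(2)
  by (intro rank_add_le_if_sign_orthogonal[OF Gf1_carrier Gf1_carrier])
    (auto simp: separating_weights_def)

lemma depends_on_bits_le_card_pos_weights:
  assumes "D \<subseteq> bits n" "depends_on_bits n D f k" and a: "separating_weights n D f a"
  shows "k \<le> card {i. i < n \<and> 0 < a (Suc i)}"
proof (rule depends_on_bits_le_card[OF assms(1,2)])
  fix x y assume xy: "x \<in> D" "y \<in> D" "\<forall>i\<in>{i. i < n \<and> 0 < a (Suc i)}. x ! i = y ! i"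
  have "(\<Sum>i<n + 1. a i * query_sign x i * query_sign y i) = 1"
    using a xy(3) unfolding separating_weights_def
    by (intro weighted_sign_correlation_eq_one) auto
  moreover have "f x \<noteq> f y \<Longrightarrow> (\<Sum>i<n + 1. a i * query_sign x i * query_sign y i) = 0"
    using a xy(1,2) unfolding separating_weights_def by blast
  ultimately show "f x = f y" by (metis zero_neq_one)
qed auto

theorem theorem4:
  fixes n k :: nat and D :: "bool list set" and f :: "bool list \<Rightarrow> bool"
  assumes "D \<subseteq> bits n"
    and "\<exists>x\<in>D. \<exists>y\<in>D. f x \<noteq> f y"
    and "depends_on_bits n D f k"
    and "exact_1query n D f"
  shows "vec_space.rank (n + 1) (Gf1 n D f False) \<in> {1..n}
       \<and> vec_space.rank (n + 1) (Gf1 n D f True) \<in> {1..n}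
       \<and> vec_space.rank (n + 1) (Gf1 n D f False) + vec_space.rank (n + 1) (Gf1 n D f True)
           \<le> 2 * n + 2 - k"
proof -
  obtain a where a: "separating_weights n D f a" by (rule exact_1query_weights[OF assms(4)])
  have D: "finite D" using finite_subset[OF assms(1) finite_bits] .
  obtain x y where "x \<in> D" "f x = False" "y \<in> D" "f y = True" using assms(2) by metis
  then have "vec_space.rank (n + 1) (Gf1 n D f b) \<in> {1..n}" for b
    using rank_Gf1_bounds[OF D a] by (cases b) auto
  moreover have "card {i. i < n \<and> 0 < a (Suc i)} + card {i. i < n + 1 \<and> a i = 0} \<le> n + 1"
    using a by (intro card_pos_Suc_add_card_zero_le) (simp add: separating_weights_def)
  ultimately show ?thesis
    using rank_Gf1_add_le[OF D a] depends_on_bits_le_card_pos_weights[OF assms(1,3) a] by auto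
qed

end
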